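(* Every 2-local derivation of a finite dimensional formally real Jordan algebra $\mathcal{A}$ is a derivation.
   Context: A real Jordan algebra is formally real if $\sum_i a_i^2=0$ (finite sum) implies each $a_i=0$. A derivation is a linear map $D$ with $D(xy)=D(x)y+xD(y)$. A 2-local derivation is a map $\Delta:\mathcal{A}\to\mathcal{A}$ (not assumed linear) such that for every $x,y\in\mathcal{A}$ there is a derivation $D_{x,y}$ with $\Delta(x)=D_{x,y}(x)$ and $\Delta(y)=D_{x,y}(y)$. *)

theory Defs
  imports "HOL-Analysis.Analysis"
begin

definition real_algebra :: "('a::real_vector \<Rightarrow> 'a \<Rightarrow> 'a) \<Rightarrow> bool" where
  "real_algebra m \<longleftrightarrow> (\<forall>z. linear (\<lambda>x. m x z)) \<and> (\<forall>x. linear (\<lambda>z. m x z))"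

definition jordan_algebra :: "('a::real_vector \<Rightarrow> 'a \<Rightarrow> 'a) \<Rightarrow> bool" where
  "jordan_algebra m \<longleftrightarrow> real_algebra m \<and> (\<forall>x y. m x y = m y x) \<and>
     (\<forall>x y. m (m x y) (m x x) = m x (m y (m x x)))"

definition finite_dimensional_space :: "'a::real_vector itself \<Rightarrow> bool" where
  "finite_dimensional_space _ \<longleftrightarrow> (\<exists>B::'a set. finite B \<and> span B = UNIV)"

definition formally_real :: "('a::real_vector \<Rightarrow> 'a \<Rightarrow> 'a) \<Rightarrow> bool" where
  "formally_real m \<longleftrightarrow>
     (\<forall>(n::nat) (a::nat \<Rightarrow> 'a). (\<Sum>i<n. m (a i) (a i)) = 0 \<longrightarrow> (\<forall>i<n. a i = 0))"

definition derivation :: "('a::real_vector \<Rightarrow> 'a \<Rightarrow> 'a) \<Rightarrow> ('a \<Rightarrow> 'a) \<Rightarrow> bool" where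
  "derivation m D \<longleftrightarrow> linear D \<and> (\<forall>x y. D (m x y) = m (D x) y + m x (D y))"

definition two_local_derivation :: "('a::real_vector \<Rightarrow> 'a \<Rightarrow> 'a) \<Rightarrow> ('a \<Rightarrow> 'a) \<Rightarrow> bool" where
  "two_local_derivation m \<Delta> \<longleftrightarrow>
     (\<forall>x y. \<exists>D. derivation m D \<and> \<Delta> x = D x \<and> \<Delta> y = D y)"

end

theory Submission
  imports Defs "HOL-Computational_Algebra.Fundamental_Theorem_Algebra"
begin

text \<open>
  Write \<open>L\<^sub>a\<close> for multiplication by \<open>a\<close> and \<open>\<tau>(a) = tr L\<^sub>a\<close>. For a derivation \<open>D\<close>
  the operator \<open>L\<^sub>D\<^sub>a = [D, L\<^sub>a]\<close> has trace zero, so \<open>\<tau>(D x \<cdot> y) = - \<tau>(x \<cdot> D y)\<close>.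
  If \<open>\<Delta>\<close> is a 2-local derivation, any two of its values are values of one derivation,
  hence \<open>\<Delta>(x + y) - \<Delta> x - \<Delta> y\<close> is orthogonal to every \<open>z\<close> for the form \<open>\<tau>(u \<cdot> z)\<close>.

  Formal reality makes this form nondegenerate. For \<open>w \<noteq> 0\<close>, factor an annihilating
  polynomial of \<open>w\<close> over the reals: an irreducible quadratic factor would yield two
  elements whose squares sum to zero, so some linear factor gives an eigenvector of
  \<open>L\<^sub>w\<close> among the polynomials in \<open>w\<close>, with a nonzero real eigenvalue. It rescales to an
  idempotent \<open>c\<close> with \<open>w \<cdot> c = \<lambda> c\<close>, and \<open>\<tau>(c) > 0\<close> because by the Peirce identity
  \<open>L\<^sub>c\<close> only has the eigenvalues \<open>0\<close>, \<open>1/2\<close> and \<open>1\<close>. Thus \<open>\<Delta>\<close> is additive, hence linear,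
  and 2-locality at \<open>x\<close> and \<open>x \<cdot> x\<close> gives \<open>\<Delta>(x \<cdot> x) = 2 x \<cdot> \<Delta> x\<close>, whose
  polarization is the Leibniz rule.
\<close>

section \<open>Real polynomials\<close>

lemma map_poly_of_real_add:
  "map_poly (of_real :: real \<Rightarrow> 'a::{real_algebra_1,comm_ring_1}) (p + q) =
   map_poly of_real p + map_poly of_real q"
  by (rule poly_eqI) (simp add: coeff_map_poly)

lemma map_poly_of_real_mult:
  "map_poly (of_real :: real \<Rightarrow> 'a::{real_algebra_1,comm_ring_1}) (p * q) =
   map_poly of_real p * map_poly of_real q"
  by (rule poly_eqI) (simp add: coeff_map_poly coeff_mult)

lemma poly_map_poly_of_real:
  "poly (map_poly of_real p) (of_real x :: 'a::{real_algebra_1,comm_ring_1}) = of_real (poly p x)"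
  by (induction p) (auto simp: map_poly_pCons)

lemma real_poly_linear_or_quadratic_factor:
  fixes s :: "real poly"
  assumes "degree s > 0"
  obtains l g where "s = [:-l, 1:] * g"
    | a b g where "b \<noteq> 0" and "s = [:a\<^sup>2 + b\<^sup>2, -2 * a, 1:] * g"
proof -
  let ?C = "map_poly complex_of_real"
  have "\<not> constant (poly (?C s))"
    using assms constant_degree[of "?C s"] by (simp add: degree_map_poly)
  then obtain z where z: "poly (?C s) z = 0"
    using fundamental_theorem_of_algebra by blast
  show thesis
  proof (cases "Im z = 0")
    case True
    then have "z = of_real (Re z)"
      by (simp add: complex_eq_iff)
    then have "poly s (Re z) = 0"
      using z poly_map_poly_of_real[of s "Re z"] by (metis of_real_eq_0_iff)
    then show thesis
      using that(1) by (metis dvdE poly_eq_0_iff_dvd)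
  next
    case False
    define q where "q = [:(Re z)\<^sup>2 + (Im z)\<^sup>2, -2 * Re z, 1:]"
    define r where "r = s mod q"
    have "poly (?C q) z = 0"
      by (simp add: q_def map_poly_pCons complex_eq_iff power2_eq_square algebra_simps)
    then have r_root: "poly (?C r) z = 0"
      using z div_mult_mod_eq[of s q]
      by (metis r_def map_poly_of_real_add map_poly_of_real_mult poly_add poly_mult mult_zero_right add_0)
    have "r = 0"
    proof (rule ccontr)
      assume "r \<noteq> 0"
      then have "degree r < 2"
        using degree_mod_less'[of q s] by (simp add: q_def r_def)
      then have r_lin: "r = [:coeff r 0, coeff r 1:]"
        by (intro poly_eqI) (auto simp: coeff_pCons coeff_eq_0 split: nat.split)
      then have "complex_of_real (coeff r 0) + z * complex_of_real (coeff r 1) = 0"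
        using r_root by (metis map_poly_pCons map_poly_0 of_real_0 poly_pCons poly_0 mult_zero_right add_0_right)
      then have "Im z * coeff r 1 = 0" and "coeff r 0 + Re z * coeff r 1 = 0"
        by (auto simp: complex_eq_iff)
      then have "coeff r 1 = 0" and "coeff r 0 = 0"
        using False by auto
      with r_lin \<open>r \<noteq> 0\<close> show False
        by simp
    qed
    then have "q dvd s"
      by (simp add: r_def mod_eq_0_iff_dvd)
    then show thesis
      using that(2)[OF False] by (auto simp: q_def elim: dvdE)
  qed
qed

section \<open>Linear algebra\<close>

lemma linear_relation_exists:
  fixes v :: "nat \<Rightarrow> 'a::real_vector" and F :: "'a set"
  assumes "finite F" and "span F = UNIV"
  obtains c where "\<exists>k\<le>card F. c k \<noteq> 0" and "(\<Sum>k\<le>card F. c k *\<^sub>R v k) = 0"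
proof (cases "inj_on v {..card F}")
  case False
  then obtain i j where "i \<le> card F" "j \<le> card F" "i \<noteq> j" and "v i = v j"
    unfolding inj_on_def by blast
  have delta: "(\<Sum>k\<le>card F. of_bool (k = n) *\<^sub>R v k) = v n" if "n \<le> card F" for n
  proof -
    have "(\<Sum>k\<le>card F. of_bool (k = n) *\<^sub>R v k) = (\<Sum>k\<le>card F. if k = n then v k else 0)"
      by (intro sum.cong) auto
    then show ?thesis
      using that by simp
  qed
  show thesis
  proof (rule that[of "\<lambda>k. of_bool (k = i) - of_bool (k = j)"])
    show "\<exists>k\<le>card F. of_bool (k = i) - of_bool (k = j) \<noteq> (0::real)"
      using \<open>i \<le> card F\<close> \<open>i \<noteq> j\<close> by (intro exI[of _ i]) auto
    show "(\<Sum>k\<le>card F. (of_bool (k = i) - of_bool (k = j)) *\<^sub>R v k) = 0"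
      using \<open>i \<le> card F\<close> \<open>j \<le> card F\<close> \<open>v i = v j\<close>
      by (simp add: scaleR_diff_left sum_subtractf delta)
  qed
next
  case True
  have "dependent (v ` {..card F})"
  proof (rule ccontr)
    assume "independent (v ` {..card F})"
    then have "card (v ` {..card F}) \<le> card F"
      using independent_span_bound[OF \<open>finite F\<close>] \<open>span F = UNIV\<close> by auto
    then show False
      using card_image[OF True] by simp
  qed
  then obtain u where "\<exists>w\<in>v ` {..card F}. u w \<noteq> 0" and "(\<Sum>w\<in>v ` {..card F}. u w *\<^sub>R w) = 0"
    using dependent_finite by blast
  then show thesis
    using that[of "u \<circ> v"] by (auto simp: sum.reindex[OF True])
qed

lemma finite_dimensional_space_basis:
  assumes "finite_dimensional_space TYPE('a)"
  obtains B :: "'a::real_vector set" where "finite B" and "independent B" and "span B = UNIV"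
proof -
  obtain F :: "'a set" where "finite F" and "span F = UNIV"
    using assms unfolding finite_dimensional_space_def by blast
  obtain B where "B \<subseteq> F" and "independent B" and "F \<subseteq> span B"
    using maximal_independent_subset by blast
  then have "span B = UNIV"
    using span_mono[OF \<open>F \<subseteq> span B\<close>] \<open>span F = UNIV\<close> by (simp add: span_span top_unique)
  then show thesis
    using that \<open>B \<subseteq> F\<close> \<open>finite F\<close> \<open>independent B\<close> finite_subset by blast
qed

lemma linear_representation_comp:
  assumes "independent U" and "\<And>w. f w \<in> span U" and "linear f"
  shows "linear (\<lambda>w. representation U (f w) u)"
  by (rule linearI) (simp_all add: linear_add[OF \<open>linear f\<close>] linear_scale[OF \<open>linear f\<close>]
      representation_add representation_scale assms)

definition trace_wrt :: "'a::real_vector set \<Rightarrow> ('a \<Rightarrow> 'a) \<Rightarrow> real" where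
  "trace_wrt B f = (\<Sum>b\<in>B. representation B (f b) b)"

locale finite_basis =
  fixes B :: "'a::real_vector set"
  assumes finite_basis: "finite B"
    and independent_basis: "independent B"
    and span_basis: "span B = UNIV"
begin

lemma linear_representation: "linear (\<lambda>v. representation B v b)"
  using linear_representation_comp[OF independent_basis _ linear_id[unfolded id_def]] span_basis
  by simp

lemma sum_representation: "(\<Sum>b\<in>B. representation B v b *\<^sub>R b) = v"
  using sum_representation_eq[OF independent_basis _ finite_basis subset_refl] span_basis
  by simp

lemma trace_wrt_add: "trace_wrt B (\<lambda>v. f v + g v) = trace_wrt B f + trace_wrt B g"
  by (simp add: trace_wrt_def linear_add[OF linear_representation] sum.distrib)

lemma trace_wrt_diff: "trace_wrt B (\<lambda>v. f v - g v) = trace_wrt B f - trace_wrt B g"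
  by (simp add: trace_wrt_def linear_diff[OF linear_representation] sum_subtractf)

lemma trace_wrt_scaleR: "trace_wrt B (\<lambda>v. c *\<^sub>R f v) = c * trace_wrt B f"
  by (simp add: trace_wrt_def linear_scale[OF linear_representation] sum_distrib_left)

lemma trace_wrt_commute:
  assumes "linear f" and "linear g"
  shows "trace_wrt B (\<lambda>v. f (g v)) = trace_wrt B (\<lambda>v. g (f v))"
proof -
  let ?r = "\<lambda>v b. representation B v b"
  have expand: "trace_wrt B (\<lambda>v. f (g v)) = (\<Sum>b\<in>B. \<Sum>c\<in>B. ?r (g b) c * ?r (f c) b)"
    if "linear f" for f g :: "'a \<Rightarrow> 'a"
  proof -
    have "trace_wrt B (\<lambda>v. f (g v)) = (\<Sum>b\<in>B. ?r (f (\<Sum>c\<in>B. ?r (g b) c *\<^sub>R c)) b)"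
      by (simp add: trace_wrt_def sum_representation)
    also have "\<dots> = (\<Sum>b\<in>B. \<Sum>c\<in>B. ?r (g b) c * ?r (f c) b)"
      by (simp add: linear_sum[OF that] linear_scale[OF that]
          linear_sum[OF linear_representation] linear_scale[OF linear_representation])
    finally show ?thesis .
  qed
  show ?thesis
    unfolding expand[OF assms(1)] expand[OF assms(2)]
    by (subst sum.swap) (simp add: mult.commute)
qed

lemma trace_wrt_frame:
  assumes "finite I" and linear_\<phi>: "\<And>i. i \<in> I \<Longrightarrow> linear (\<phi> i)"
    and frame: "\<And>w. (\<Sum>i\<in>I. \<phi> i w *\<^sub>R e i) = w" and "linear f"
  shows "trace_wrt B f = (\<Sum>i\<in>I. \<phi> i (f (e i)))"
proof -
  let ?r = "\<lambda>v b. representation B v b"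
  have "trace_wrt B f = (\<Sum>b\<in>B. ?r (f (\<Sum>i\<in>I. \<phi> i b *\<^sub>R e i)) b)"
    by (simp add: trace_wrt_def frame)
  also have "\<dots> = (\<Sum>b\<in>B. \<Sum>i\<in>I. ?r (f (e i)) b * \<phi> i b)"
    by (simp add: linear_sum[OF \<open>linear f\<close>] linear_scale[OF \<open>linear f\<close>]
        linear_sum[OF linear_representation] linear_scale[OF linear_representation] mult.commute)
  also have "\<dots> = (\<Sum>i\<in>I. \<phi> i (\<Sum>b\<in>B. ?r (f (e i)) b *\<^sub>R b))"
    by (subst sum.swap)
      (simp add: linear_sum[OF linear_\<phi>] linear_scale[OF linear_\<phi>] cong: sum.cong)
  also have "\<dots> = (\<Sum>i\<in>I. \<phi> i (f (e i)))"
    by (simp add: sum_representation)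
  finally show ?thesis .
qed

lemma dim_pos:
  fixes S :: "'a set"
  assumes "v \<in> S" and "v \<noteq> 0"
  shows "0 < dim S"
proof -
  obtain U where U: "U \<subseteq> S" "independent U" "S \<subseteq> span U"
    using maximal_independent_subset by blast
  have "finite U"
    using independent_span_bound[OF finite_basis U(2)] span_basis by blast
  moreover have "U \<noteq> {}"
    using assms U(3) by auto
  ultimately show ?thesis
    using basis_card_eq_dim[OF U(1) U(3) U(2)] by (metis card_gt_0_iff)
qed

lemma trace_wrt_idempotent:
  assumes "linear P" and idem: "\<And>v. P (P v) = P v"
  shows "trace_wrt B P = dim (range P)"
proof -
  obtain U where U: "U \<subseteq> range P" "independent U" "range P \<subseteq> span U"
    using maximal_independent_subset by blast
  have "finite U"
    using independent_span_bound[OF finite_basis U(2)] span_basis by blast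
  have P_in_span: "P w \<in> span U" for w
    using U(3) by blast
  have P_fix: "P u = u" if "u \<in> U" for u
    using U(1) that idem by blast
  have "linear (\<lambda>w. w - P w)"
    using \<open>linear P\<close> by (simp add: linear_compose_sub linear_id[unfolded id_def])
  define \<phi> where
    "\<phi> = case_sum (\<lambda>u w. representation U (P w) u) (\<lambda>b w. representation B (w - P w) b)"
  have "linear (\<phi> i)" for i
    using linear_representation_comp[OF U(2) P_in_span \<open>linear P\<close>]
      linear_representation_comp[OF independent_basis _ \<open>linear (\<lambda>w. w - P w)\<close>] span_basis
    by (cases i) (simp_all add: \<phi>_def)
  moreover have "(\<Sum>i\<in>U <+> B. \<phi> i w *\<^sub>R case_sum id id i) = w" for w
    using sum_representation_eq[OF U(2) P_in_span \<open>finite U\<close> subset_refl]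
      sum_representation[of "w - P w"]
    by (simp add: sum.Plus \<open>finite U\<close> finite_basis \<phi>_def o_def)
  ultimately have "trace_wrt B P = (\<Sum>i\<in>U <+> B. \<phi> i (P (case_sum id id i)))"
    by (intro trace_wrt_frame) (simp_all add: \<open>finite U\<close> finite_basis \<open>linear P\<close>)
  also have "\<dots> = card U"
    by (simp add: sum.Plus \<open>finite U\<close> finite_basis \<phi>_def idem P_fix
        representation_basis[OF U(2)] representation_zero cong: sum.cong)
  also have "card U = dim (range P)"
    using basis_card_eq_dim[OF U(1) U(3) U(2)] .
  finally show ?thesis .
qed

lemma trace_wrt_pos_if_peirce:
  assumes "linear T" and peirce: "\<And>w. 2 *\<^sub>R T (T (T w)) = 3 *\<^sub>R T (T w) - T w"
    and "T v = v" and "v \<noteq> 0"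
  shows "0 < trace_wrt B T"
proof -
  (* The eigenvalues of T lie in {0, 1/2, 1}: T = P1 + Ph/2 for the spectral idempotents
     P1, Ph belonging to 1 and 1/2, whose traces are their ranks. *)
  define P1 where "P1 w = 2 *\<^sub>R T (T w) - T w" for w
  define Ph where "Ph w = 4 *\<^sub>R T w - 4 *\<^sub>R T (T w)" for w
  have T_P1: "T (P1 w) = P1 w" for w
  proof -
    have "T (P1 w) = 2 *\<^sub>R T (T (T w)) - T (T w)"
      by (simp add: P1_def linear_diff[OF \<open>linear T\<close>] linear_scale[OF \<open>linear T\<close>])
    also have "\<dots> = (3 *\<^sub>R T (T w) - T w) - T (T w)"
      by (simp only: peirce)
    also have "\<dots> = P1 w"
      using scaleR_add_left[of 2 1 "T (T w)"] by (simp add: P1_def algebra_simps)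
    finally show ?thesis .
  qed
  have T_Ph: "T (Ph w) = (1/2) *\<^sub>R Ph w" for w
  proof -
    have "T (Ph w) = 4 *\<^sub>R T (T w) - 2 *\<^sub>R (2 *\<^sub>R T (T (T w)))"
      by (simp add: Ph_def linear_diff[OF \<open>linear T\<close>] linear_scale[OF \<open>linear T\<close>])
    also have "\<dots> = 4 *\<^sub>R T (T w) - 2 *\<^sub>R (3 *\<^sub>R T (T w) - T w)"
      by (simp only: peirce)
    also have "\<dots> = (1/2) *\<^sub>R Ph w"
      by (simp add: Ph_def algebra_simps flip: scaleR_add_left)
    finally show ?thesis .
  qed
  have "linear P1" "linear Ph"
    by (intro linearI; simp add: P1_def Ph_def linear_add[OF \<open>linear T\<close>]
        linear_scale[OF \<open>linear T\<close>] algebra_simps)+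
  moreover have "P1 (P1 w) = P1 w" "Ph (Ph w) = Ph w" for w
    by (simp_all add: P1_def[of "P1 w"] Ph_def[of "Ph w"] T_P1 T_Ph scaleR_2
        linear_scale[OF \<open>linear T\<close>])
  moreover have "T = (\<lambda>w. P1 w + (1/2) *\<^sub>R Ph w)"
    by (simp add: fun_eq_iff P1_def Ph_def algebra_simps scaleR_2)
  ultimately have "trace_wrt B T = dim (range P1) + 1/2 * dim (range Ph)"
    by (simp add: trace_wrt_add trace_wrt_scaleR trace_wrt_idempotent)
  moreover have "P1 v = v"
    using \<open>T v = v\<close> by (simp add: P1_def scaleR_2)
  then have "0 < dim (range P1)"
    using dim_pos[of v "range P1"] \<open>v \<noteq> 0\<close> by (metis rangeI)
  ultimately show ?thesis
    by simp
qed

end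

section \<open>Polynomials in one element of a Jordan algebra\<close>

locale jordan =
  fixes mult :: "'a::real_vector \<Rightarrow> 'a \<Rightarrow> 'a"  (infixl "\<cdot>" 70)
  assumes jordan_algebra: "jordan_algebra (\<cdot>)"
begin

lemma bilinear_mult: "bilinear (\<cdot>)"
  using jordan_algebra by (simp add: jordan_algebra_def real_algebra_def bilinear_def)

lemma mult_commute: "x \<cdot> y = y \<cdot> x"
  using jordan_algebra by (simp add: jordan_algebra_def)

lemma jordan_identity: "(x \<cdot> y) \<cdot> (x \<cdot> x) = x \<cdot> (y \<cdot> (x \<cdot> x))"
  using jordan_algebra unfolding jordan_algebra_def by blast

lemmas mult_distribs [simp] =
  bilinear_ladd[OF bilinear_mult] bilinear_radd[OF bilinear_mult]
  bilinear_lsub[OF bilinear_mult] bilinear_rsub[OF bilinear_mult]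
  bilinear_lmul[OF bilinear_mult] bilinear_rmul[OF bilinear_mult]
  bilinear_lneg[OF bilinear_mult] bilinear_rneg[OF bilinear_mult]
  bilinear_lzero[OF bilinear_mult] bilinear_rzero[OF bilinear_mult]

lemma linear_mult_left: "linear ((\<cdot>) a)"
  using bilinear_mult by (simp add: bilinear_def)

(* Inclusion-exclusion isolates the part of the cubic map J that is trilinear in a, b, z. *)
lemma jordan_identity_linearized:
  "(z \<cdot> y) \<cdot> (a \<cdot> b) + (a \<cdot> y) \<cdot> (b \<cdot> z) + (b \<cdot> y) \<cdot> (a \<cdot> z) =
   z \<cdot> (y \<cdot> (a \<cdot> b)) + a \<cdot> (y \<cdot> (b \<cdot> z)) + b \<cdot> (y \<cdot> (a \<cdot> z))"
proof -
  define J where "J x = (x \<cdot> y) \<cdot> (x \<cdot> x) - x \<cdot> (y \<cdot> (x \<cdot> x))" for x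
  have "J (a + b + z) - J (a + b) - J (a + z) - J (b + z) + J a + J b + J z =
    2 *\<^sub>R ((z \<cdot> y) \<cdot> (a \<cdot> b) + (a \<cdot> y) \<cdot> (b \<cdot> z) + (b \<cdot> y) \<cdot> (a \<cdot> z) -
      (z \<cdot> (y \<cdot> (a \<cdot> b)) + a \<cdot> (y \<cdot> (b \<cdot> z)) + b \<cdot> (y \<cdot> (a \<cdot> z))))"
    unfolding J_def
    by (simp add: algebra_simps scaleR_2 mult_commute[of b a] mult_commute[of z a]
        mult_commute[of z b] mult_commute[of y a] mult_commute[of y b] mult_commute[of y z])
  moreover have "J x = 0" for x
    by (simp add: J_def jordan_identity)
  ultimately show ?thesis
    by simp
qed

lemma idempotent_peirce:
  assumes "c \<cdot> c = c"
  shows "2 *\<^sub>R (c \<cdot> (c \<cdot> (c \<cdot> z))) = 3 *\<^sub>R (c \<cdot> (c \<cdot> z)) - c \<cdot> z"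
proof -
  have "(z \<cdot> c) \<cdot> (c \<cdot> c) + (c \<cdot> c) \<cdot> (c \<cdot> z) + (c \<cdot> c) \<cdot> (c \<cdot> z) =
      z \<cdot> (c \<cdot> (c \<cdot> c)) + c \<cdot> (c \<cdot> (c \<cdot> z)) + c \<cdot> (c \<cdot> (c \<cdot> z))"
    by (rule jordan_identity_linearized)
  then show ?thesis
    using assms scaleR_add_left[of 2 1 "c \<cdot> (c \<cdot> z)"]
    by (simp add: mult_commute[of z c] mult_commute[of "c \<cdot> z" c] scaleR_2 algebra_simps)
qed

lemma mult_mult_left_expand:
  "(x \<cdot> (x \<cdot> p)) \<cdot> u =
   2 *\<^sub>R ((x \<cdot> p) \<cdot> (x \<cdot> u)) + (x \<cdot> x) \<cdot> (p \<cdot> u) - p \<cdot> (x \<cdot> (x \<cdot> u)) - x \<cdot> (x \<cdot> (p \<cdot> u))"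
proof -
  have "(u \<cdot> x) \<cdot> (p \<cdot> x) + (p \<cdot> x) \<cdot> (x \<cdot> u) + (x \<cdot> x) \<cdot> (p \<cdot> u) =
      u \<cdot> (x \<cdot> (p \<cdot> x)) + p \<cdot> (x \<cdot> (x \<cdot> u)) + x \<cdot> (x \<cdot> (p \<cdot> u))"
    by (rule jordan_identity_linearized)
  then show ?thesis
    by (simp add: mult_commute[of u x] mult_commute[of p x] mult_commute[of "x \<cdot> u" "x \<cdot> p"]
        mult_commute[of u "x \<cdot> (x \<cdot> p)"] scaleR_2 algebra_simps)
qed

definition operator_commute :: "'a \<Rightarrow> 'a \<Rightarrow> bool" where
  "operator_commute a b \<longleftrightarrow> (\<forall>u. a \<cdot> (b \<cdot> u) = b \<cdot> (a \<cdot> u))"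

lemma operator_commute_refl: "operator_commute a a"
  by (simp add: operator_commute_def)

lemma operator_commute_sym: "operator_commute a b \<longleftrightarrow> operator_commute b a"
  by (auto simp: operator_commute_def)

lemma operator_commute_add:
  "operator_commute a b \<Longrightarrow> operator_commute a c \<Longrightarrow> operator_commute a (b + c)"
  by (simp add: operator_commute_def)

lemma operator_commute_scaleR: "operator_commute a b \<Longrightarrow> operator_commute a (r *\<^sub>R b)"
  by (simp add: operator_commute_def)

lemma operator_commute_square: "operator_commute x (x \<cdot> x)"
  unfolding operator_commute_def by (metis jordan_identity mult_commute)

lemma operator_commute_mult_mult:
  assumes "operator_commute a x" and "operator_commute a (x \<cdot> x)"
    and "operator_commute a p" and "operator_commute a (x \<cdot> p)"
  shows "operator_commute a (x \<cdot> (x \<cdot> p))"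
  using assms by (simp add: operator_commute_def mult_mult_left_expand)

(* peval x s is the value at x of the polynomial X * s; the factor X avoids a unit element,
   which the algebra need not have. *)
definition peval :: "'a \<Rightarrow> real poly \<Rightarrow> 'a" where
  "peval x s = fold_coeffs (\<lambda>c v. c *\<^sub>R x + x \<cdot> v) s 0"

lemma peval_0 [simp]: "peval x 0 = 0"
  by (simp add: peval_def)

lemma peval_pCons [simp]: "peval x (pCons c s) = c *\<^sub>R x + x \<cdot> peval x s"
  by (cases "c = 0 \<and> s = 0") (auto simp: peval_def)

lemma peval_add [simp]: "peval x (s + t) = peval x s + peval x t"
  by (induction s t rule: poly_induct2) (simp_all add: algebra_simps)

lemma peval_smult [simp]: "peval x (smult c s) = c *\<^sub>R peval x s"
  by (induction s) (simp_all add: algebra_simps)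

lemma peval_sum: "peval x (\<Sum>i\<in>I. f i) = (\<Sum>i\<in>I. peval x (f i))"
  by (induction I rule: infinite_finite_induct) simp_all

lemma peval_one: "peval x 1 = x"
  by (simp add: one_pCons)

lemma operator_commute_peval: "operator_commute x (peval x s)"
proof -
  (* mult_mult_left_expand involves L (x \<cdot> x), so commuting with it is carried along. *)
  let ?Q = "\<lambda>p. operator_commute x p \<and> operator_commute (x \<cdot> x) p"
  have Q_x: "?Q x" and Q_xx: "?Q (x \<cdot> x)"
    using operator_commute_square operator_commute_sym operator_commute_refl by blast+
  have "?Q (peval x s) \<and> ?Q (x \<cdot> peval x s)"
  proof (induction s)
    case 0
    show ?case
      by (simp add: operator_commute_def)
  next
    case (pCons c s)
    then have "?Q (x \<cdot> (x \<cdot> peval x s))"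
      using Q_x Q_xx by (blast intro: operator_commute_mult_mult)
    with pCons.IH Q_x Q_xx show ?case
      by (simp add: operator_commute_add operator_commute_scaleR)
  qed
  then show ?thesis
    by blast
qed

lemma peval_mult: "peval x s \<cdot> peval x t = peval x (pCons 0 (s * t))"
proof (induction s)
  case 0
  show ?case
    by simp
next
  case (pCons c s)
  have "(x \<cdot> peval x s) \<cdot> peval x t = peval x t \<cdot> (x \<cdot> peval x s)"
    by (rule mult_commute)
  also have "\<dots> = x \<cdot> (peval x t \<cdot> peval x s)"
    using operator_commute_peval[of x t] by (simp add: operator_commute_def)
  also have "\<dots> = x \<cdot> peval x (pCons 0 (s * t))"
    using pCons.IH by (simp add: mult_commute[of "peval x t"])
  finally show ?case
    by simp
qed

lemma peval_mult_eq_0: "peval x t = 0 \<Longrightarrow> peval x (s * t) = 0"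
  by (induction s) simp_all

lemma peval_mult_eigenvector:
  assumes "peval x ([:-l, 1:] * t) = 0"
  shows "peval x (s * t) = poly s l *\<^sub>R peval x t"
proof (induction s)
  case 0
  show ?case
    by simp
next
  case (pCons c s)
  have "pCons 0 (s * t) = s * ([:-l, 1:] * t) + smult l (s * t)"
    by (simp add: algebra_simps)
  then have "x \<cdot> peval x (s * t) = l *\<^sub>R peval x (s * t)"
    using peval_mult_eq_0[OF assms, of s] by (metis add_0 peval_add peval_pCons peval_smult scaleR_zero_left)
  with pCons.IH show ?case
    by (simp add: algebra_simps)
qed

lemma peval_annihilator_exists:
  assumes "finite_dimensional_space TYPE('a)"
  obtains s where "s \<noteq> 0" and "peval x s = 0"
proof -
  obtain F :: "'a set" where "finite F" and "span F = UNIV"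
    using assms unfolding finite_dimensional_space_def by blast
  then obtain c where c: "\<exists>k\<le>card F. c k \<noteq> 0"
    and "(\<Sum>k\<le>card F. c k *\<^sub>R peval x (monom 1 k)) = 0"
    by (rule linear_relation_exists)
  define s where "s = (\<Sum>k\<le>card F. smult (c k) (monom 1 k))"
  have "peval x s = 0"
    using \<open>(\<Sum>k\<le>card F. c k *\<^sub>R peval x (monom 1 k)) = 0\<close> by (simp add: s_def peval_sum)
  moreover have "coeff s k = (if k \<le> card F then c k else 0)" for k
    unfolding s_def coeff_sum by (simp add: if_distrib[of "(*) _"] cong: if_cong)
  then have "s \<noteq> 0"
    using c by (metis coeff_0)
  ultimately show thesis
    using that by blast
qed

end

locale formally_real_jordan = jordan +
  assumes formally_real: "formally_real (\<cdot>)"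
begin

lemma sum_squares_eq_0D:
  assumes "a \<cdot> a + b \<cdot> b = 0"
  shows "a = 0 \<and> b = 0"
proof -
  define f where "f i = (if i = 0 then a else b)" for i :: nat
  have "(\<Sum>i<2. f i \<cdot> f i) = 0"
    using assms by (simp add: f_def numeral_2_eq_2)
  then have "\<forall>i<2. f i = 0"
    using formally_real unfolding formally_real_def by blast
  then have "f 0 = 0" and "f 1 = 0"
    by simp_all
  then show ?thesis
    by (simp add: f_def)
qed

lemma square_eq_0_iff: "a \<cdot> a = 0 \<longleftrightarrow> a = 0"
  using sum_squares_eq_0D[of a 0] by auto

lemma peval_quadratic_factor_cancel:
  assumes "b \<noteq> 0" and "peval x ([:a\<^sup>2 + b\<^sup>2, -2 * a, 1:] * f) = 0"
  shows "peval x f = 0"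
proof -
  (* q = (X - a)^2 + b^2 turns X * f * q * f into a sum of two squares. *)
  define q where "q = [:a\<^sup>2 + b\<^sup>2, -2 * a, 1:]"
  define L where "L = [:-a, 1:]"
  define g where "g = smult (1 / b) (L * f)"
  have "f * (q * f) = L * L * (f * f) + smult (b\<^sup>2) (f * f)"
    by (simp add: q_def L_def algebra_simps power2_eq_square smult_add_left)
  moreover have "g * g = smult (1 / b\<^sup>2) (L * L * (f * f))"
    by (simp add: g_def mult_smult_left mult_smult_right power2_eq_square ac_simps)
  ultimately have "g * g + f * f = smult (1 / b\<^sup>2) (f * (q * f))"
    using \<open>b \<noteq> 0\<close> by (simp add: smult_add_right)
  have "peval x g \<cdot> peval x g + peval x f \<cdot> peval x f = peval x (pCons 0 (g * g + f * f))"
    by (simp add: peval_mult)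
  also have "\<dots> = (1 / b\<^sup>2) *\<^sub>R peval x (pCons 0 f * (q * f))"
    using \<open>g * g + f * f = smult (1 / b\<^sup>2) (f * (q * f))\<close> by simp
  also have "\<dots> = 0"
    using assms(2) by (simp add: q_def peval_mult_eq_0)
  finally show ?thesis
    using sum_squares_eq_0D by blast
qed

lemma peval_eigenvector_exists:
  assumes "s \<noteq> 0" and "peval x t \<noteq> 0" and "peval x (s * t) = 0"
  shows "\<exists>l f. peval x f \<noteq> 0 \<and> peval x ([:-l, 1:] * f) = 0"
  using assms
proof (induction "degree s" arbitrary: s rule: less_induct)
  case less
  show ?case
  proof (cases "degree s = 0")
    case True
    then obtain c where "s = [:c:]"
      by (rule degree_eq_zeroE)
    then show ?thesis
      using less.prems by simp
  next
    case False
    then have "0 < degree s"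
      by simp
    then obtain d g where s: "s = d * g"
      and d: "(\<exists>l. d = [:-l, 1:]) \<or> (\<exists>a b. b \<noteq> 0 \<and> d = [:a\<^sup>2 + b\<^sup>2, -2 * a, 1:])"
      by (cases rule: real_poly_linear_or_quadratic_factor) blast+
    show ?thesis
    proof (cases "peval x (g * t) = 0")
      case True
      have "d \<noteq> 0" and "g \<noteq> 0" and "0 < degree d"
        using less.prems(1) s d by auto
      then have "degree g < degree s"
        using s by (simp add: degree_mult_eq)
      then show ?thesis
        using less.hyps \<open>g \<noteq> 0\<close> less.prems(2) True by blast
    next
      case False
      moreover have "peval x (d * (g * t)) = 0"
        using less.prems(3) s by (simp add: mult.assoc)
      ultimately show ?thesis
        using d peval_quadratic_factor_cancel by blast
    qed
  qed
qed

lemma idempotent_eigenvector_exists: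
  assumes "finite_dimensional_space TYPE('a)" and "x \<noteq> 0"
  obtains c l where "c \<noteq> 0" and "c \<cdot> c = c" and "x \<cdot> c = l *\<^sub>R c" and "l \<noteq> 0"
proof -
  obtain s where "s \<noteq> 0" and "peval x (s * 1) = 0"
    using peval_annihilator_exists[OF assms(1)] by auto
  then obtain l f where f: "peval x f \<noteq> 0" and l: "peval x ([:-l, 1:] * f) = 0"
    using peval_eigenvector_exists[of s x 1] \<open>x \<noteq> 0\<close> by (auto simp: peval_one)
  define e where "e = peval x f"
  have "x \<cdot> e = l *\<^sub>R e"
    using peval_mult_eigenvector[OF l, of "[:0, 1:]"] by (simp add: e_def)
  moreover have "e \<cdot> e = (l * poly f l) *\<^sub>R e"
    using peval_mult_eigenvector[OF l, of "pCons 0 f"] by (simp add: e_def peval_mult)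
  moreover have "e \<cdot> e \<noteq> 0"
    using f by (simp add: e_def square_eq_0_iff)
  ultimately have "l * poly f l \<noteq> 0" and "x \<cdot> e = l *\<^sub>R e"
    by auto
  then show thesis
    using that[of "(1 / (l * poly f l)) *\<^sub>R e" l] \<open>e \<cdot> e = (l * poly f l) *\<^sub>R e\<close> f
    by (simp add: e_def power2_eq_square)
qed

end

section \<open>The trace form\<close>

(* Finite-dimensional formally real Jordan algebras are the Euclidean Jordan algebras;
   the basis B only serves to compute traces. *)
locale euclidean_jordan = formally_real_jordan mult + finite_basis B
  for mult :: "'a::real_vector \<Rightarrow> 'a \<Rightarrow> 'a"  (infixl "\<cdot>" 70) and B :: "'a set"
begin

lemma finite_dimensional: "finite_dimensional_space TYPE('a)"
  using finite_basis span_basis by (auto simp: finite_dimensional_space_def)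

definition mult_trace :: "'a \<Rightarrow> real" where
  "mult_trace a = trace_wrt B ((\<cdot>) a)"

lemma mult_trace_add: "mult_trace (a + b) = mult_trace a + mult_trace b"
proof -
  have "(\<cdot>) (a + b) = (\<lambda>v. a \<cdot> v + b \<cdot> v)"
    by (rule ext) simp
  then show ?thesis
    by (simp add: mult_trace_def trace_wrt_add)
qed

lemma mult_trace_diff: "mult_trace (a - b) = mult_trace a - mult_trace b"
proof -
  have "(\<cdot>) (a - b) = (\<lambda>v. a \<cdot> v - b \<cdot> v)"
    by (rule ext) simp
  then show ?thesis
    by (simp add: mult_trace_def trace_wrt_diff)
qed

lemma mult_trace_scaleR: "mult_trace (r *\<^sub>R a) = r * mult_trace a"
proof -
  have "(\<cdot>) (r *\<^sub>R a) = (\<lambda>v. r *\<^sub>R (a \<cdot> v))"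
    by (rule ext) simp
  then show ?thesis
    by (simp add: mult_trace_def trace_wrt_scaleR)
qed

lemma mult_trace_derivation:
  assumes "derivation (\<cdot>) D"
  shows "mult_trace (D a) = 0"
proof -
  have "linear D" and "(\<cdot>) (D a) = (\<lambda>z. D (a \<cdot> z) - a \<cdot> D z)"
    using assms by (auto simp: derivation_def)
  then show ?thesis
    using trace_wrt_commute[OF \<open>linear D\<close> linear_mult_left]
    by (simp add: mult_trace_def trace_wrt_diff)
qed

lemma mult_trace_derivation_skew:
  assumes "derivation (\<cdot>) D"
  shows "mult_trace (D x \<cdot> y) = - mult_trace (x \<cdot> D y)"
  using mult_trace_derivation[OF assms, of "x \<cdot> y"] assms
  by (simp add: derivation_def mult_trace_add)

lemma mult_trace_idempotent_pos:
  assumes "c \<cdot> c = c" and "c \<noteq> 0"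
  shows "0 < mult_trace c"
  unfolding mult_trace_def
  using trace_wrt_pos_if_peirce[OF linear_mult_left idempotent_peirce] assms by blast

lemma mult_trace_nondegenerate:
  assumes "w \<noteq> 0"
  obtains z where "mult_trace (w \<cdot> z) \<noteq> 0"
proof -
  obtain c l where "c \<noteq> 0" and "c \<cdot> c = c" and "w \<cdot> c = l *\<^sub>R c" and "l \<noteq> 0"
    using idempotent_eigenvector_exists[OF finite_dimensional assms] .
  then have "mult_trace (w \<cdot> c) \<noteq> 0"
    using mult_trace_idempotent_pos[of c] by (simp add: mult_trace_scaleR)
  then show thesis
    by (rule that)
qed

end

section \<open>2-local derivations\<close>

lemma two_local_derivation_scaleR:
  assumes "two_local_derivation m \<Delta>"
  shows "\<Delta> (r *\<^sub>R x) = r *\<^sub>R \<Delta> x"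
proof -
  obtain D where "derivation m D" and "\<Delta> x = D x" and "\<Delta> (r *\<^sub>R x) = D (r *\<^sub>R x)"
    using assms unfolding two_local_derivation_def by blast
  then show ?thesis
    by (simp add: derivation_def linear_scale)
qed

context jordan
begin

lemma derivation_if_linear_two_local:
  assumes two_local: "two_local_derivation (\<cdot>) \<Delta>" and "linear \<Delta>"
  shows "derivation (\<cdot>) \<Delta>"
proof -
  have square: "\<Delta> (x \<cdot> x) = 2 *\<^sub>R (x \<cdot> \<Delta> x)" for x
  proof -
    obtain D where "derivation (\<cdot>) D" and "\<Delta> x = D x" and "\<Delta> (x \<cdot> x) = D (x \<cdot> x)"
      using two_local unfolding two_local_derivation_def by blast
    then show ?thesis
      by (simp add: derivation_def mult_commute[of "D x"] scaleR_2)
  qed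
  have "\<Delta> (x \<cdot> y) = \<Delta> x \<cdot> y + x \<cdot> \<Delta> y" for x y
  proof -
    have "\<Delta> ((x + y) \<cdot> (x + y)) = 2 *\<^sub>R ((x + y) \<cdot> \<Delta> (x + y))"
      by (rule square)
    then have "2 *\<^sub>R \<Delta> (x \<cdot> y) = 2 *\<^sub>R (\<Delta> x \<cdot> y + x \<cdot> \<Delta> y)"
      using \<open>linear \<Delta>\<close>
      by (simp add: square linear_add linear_scale mult_commute[of y x] mult_commute[of y "\<Delta> x"]
          scaleR_2 algebra_simps)
    then show ?thesis
      by simp
  qed
  with \<open>linear \<Delta>\<close> show ?thesis
    by (simp add: derivation_def)
qed

end

context euclidean_jordan
begin

lemma two_local_derivation_add:
  assumes two_local: "two_local_derivation (\<cdot>) \<Delta>"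
  shows "\<Delta> (x + y) = \<Delta> x + \<Delta> y"
proof (rule ccontr)
  have skew: "mult_trace (\<Delta> u \<cdot> z) = - mult_trace (u \<cdot> \<Delta> z)" for u z
  proof -
    obtain D where "derivation (\<cdot>) D" and "\<Delta> u = D u" and "\<Delta> z = D z"
      using two_local unfolding two_local_derivation_def by blast
    then show ?thesis
      using mult_trace_derivation_skew by simp
  qed
  assume "\<Delta> (x + y) \<noteq> \<Delta> x + \<Delta> y"
  then have "\<Delta> (x + y) - \<Delta> x - \<Delta> y \<noteq> 0"
    by (simp only: diff_diff_eq right_minus_eq) simp
  then obtain z where "mult_trace ((\<Delta> (x + y) - \<Delta> x - \<Delta> y) \<cdot> z) \<noteq> 0"
    by (rule mult_trace_nondegenerate)
  moreover have "mult_trace ((\<Delta> (x + y) - \<Delta> x - \<Delta> y) \<cdot> z) = 0"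
    by (simp add: mult_trace_diff mult_trace_add skew)
  ultimately show False
    by contradiction
qed

theorem two_local_derivation_is_derivation:
  assumes "two_local_derivation (\<cdot>) \<Delta>"
  shows "derivation (\<cdot>) \<Delta>"
proof (rule derivation_if_linear_two_local[OF assms])
  show "linear \<Delta>"
    using two_local_derivation_add[OF assms] two_local_derivation_scaleR[OF assms]
    by (rule linearI)
qed

end

theorem theorem5p3:
  fixes m :: "'a::real_vector \<Rightarrow> 'a \<Rightarrow> 'a" and \<Delta> :: "'a \<Rightarrow> 'a"
  assumes "jordan_algebra m"
    and "finite_dimensional_space TYPE('a)"
    and "formally_real m"
    and "two_local_derivation m \<Delta>"
  shows "derivation m \<Delta>"
proof -
  obtain B :: "'a set" where "finite B" and "independent B" and "span B = UNIV"
    using finite_dimensional_space_basis[OF assms(2)] .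
  then interpret euclidean_jordan m B
    using assms(1,3) by unfold_locales
  show ?thesis
    using two_local_derivation_is_derivation[OF assms(4)] .
qed

end
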